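(* The $\Sigma_1$-theory $\mathcal{T}_\varsigma$ is stably finite, and thus has the finite model property, with respect to $\{\sigma\}$.
   Context: $\varsigma:\mathbb{N}\to\mathbb{N}$ is the Busy Beaver function: $\varsigma(n)$ is the maximum number of $1$'s that a halting Turing machine with at most $n$ states can leave on its tape, starting from an all-$0$ tape. $\Sigma_1$ is the empty signature (only equality, interpreted as identity) with one sort $\sigma$. Let $\psi_{\ge n}=\exists x_1\dots x_n.\bigwedge_{1\le i<j\le n}\neg(x_i=x_j)$, $\psi_{\le n}=\exists x_1\dots x_n\forall y.\bigvee_{i=1}^n y=x_i$, $\psi_{=n}=\psi_{\ge n}\wedge\psi_{\le n}$. $\mathcal{T}_\varsigma$ is the $\Sigma_1$-theory (class of all $\Sigma_1$-interpretations satisfying the axioms) axiomatized by $\{\psi_{\ge\varsigma(k+2)}\vee\bigvee_{i=2}^{k+2}\psi_{=\varsigma(i)}:k\in\mathbb{N}\}$. A theory $\mathcal{T}$ is stably finite w.r.t. $\{\sigma\}$ if for every quantifier-free $\phi$ and $\mathcal{T}$-interpretation $\mathcal{A}$ satisfying $\phi$ there is a $\mathcal{T}$-interpretation $\mathcal{B}$ satisfying $\phi$ with $|\sigma^{\mathcal{B}}|$ finite and $|\sigma^{\mathcal{B}}|\le|\sigma^{\mathcal{A}}|$. It has the finite model property w.r.t. $\{\sigma\}$ if every quantifier-free formula satisfied by some $\mathcal{T}$-interpretation is satisfied by some $\mathcal{T}$-interpretation with finite domain. *)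

theory Defs
  imports Main "HOL-Library.Equipollence"
begin

text \<open>A Turing machine with n states (states 0..n-1, start state 0) over the
alphabet {0,1} (False/True). The transition maps (state, read symbol) to
(symbol to write, move right?, next state) where None is the halting state.\<close>

type_synonym tm = "nat \<Rightarrow> bool \<Rightarrow> bool \<times> bool \<times> nat option"

definition tm_wf :: "nat \<Rightarrow> tm \<Rightarrow> bool" where
  "tm_wf n M \<longleftrightarrow> 0 < n \<and>
     (\<forall>q<n. \<forall>b q'. snd (snd (M q b)) = Some q' \<longrightarrow> q' < n)"

type_synonym config = "nat option \<times> (int \<Rightarrow> bool) \<times> int"

fun tm_step :: "tm \<Rightarrow> config \<Rightarrow> config" where
  "tm_step M (None, t, h) = (None, t, h)"
| "tm_step M (Some q, t, h) =
     (let (w, r, q') = M q (t h) in (q', t(h := w), if r then h + 1 else h - 1))"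

definition tm_run :: "tm \<Rightarrow> nat \<Rightarrow> config" where
  "tm_run M k = (tm_step M ^^ k) (Some 0, \<lambda>_. False, 0)"

definition halts_with :: "tm \<Rightarrow> nat \<Rightarrow> bool" where
  "halts_with M c \<longleftrightarrow> (\<exists>k. fst (tm_run M k) = None \<and>
       c = card {i. fst (snd (tm_run M k)) i})"

text \<open>Machines with fewer states embed into machines with exactly n states
(unused states), so "at most n states" = "state set {0..<n}".\<close>
definition busy_beaver :: "nat \<Rightarrow> nat" where
  "busy_beaver n = Sup {c. \<exists>M. tm_wf n M \<and> halts_with M c}"

datatype form = FTrue | FFalse | Eq nat nat | Neg form | Conj form form
  | Disj form form | Ex nat form | All nat form

fun sat :: "'a set \<Rightarrow> (nat \<Rightarrow> 'a) \<Rightarrow> form \<Rightarrow> bool" where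
  "sat D v FTrue = True"
| "sat D v FFalse = False"
| "sat D v (Eq x y) = (v x = v y)"
| "sat D v (Neg p) = (\<not> sat D v p)"
| "sat D v (Conj p q) = (sat D v p \<and> sat D v q)"
| "sat D v (Disj p q) = (sat D v p \<or> sat D v q)"
| "sat D v (Ex x p) = (\<exists>d\<in>D. sat D (v(x := d)) p)"
| "sat D v (All x p) = (\<forall>d\<in>D. sat D (v(x := d)) p)"

fun qfree :: "form \<Rightarrow> bool" where
  "qfree (Ex x p) = False"
| "qfree (All x p) = False"
| "qfree (Neg p) = qfree p"
| "qfree (Conj p q) = (qfree p \<and> qfree q)"
| "qfree (Disj p q) = (qfree p \<and> qfree q)"
| "qfree _ = True"

definition interp :: "'a set \<Rightarrow> (nat \<Rightarrow> 'a) \<Rightarrow> bool" where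
  "interp D v \<longleftrightarrow> D \<noteq> {} \<and> (\<forall>x. v x \<in> D)"

definition big_and :: "form list \<Rightarrow> form" where "big_and ps = foldr Conj ps FTrue"
definition big_or :: "form list \<Rightarrow> form" where "big_or ps = foldr Disj ps FFalse"
definition exs :: "nat list \<Rightarrow> form \<Rightarrow> form" where "exs xs p = foldr Ex xs p"

text \<open>Variables x_1..x_n are 1..n, y is 0.\<close>
definition psi_ge :: "nat \<Rightarrow> form" where
  "psi_ge n = exs [1..<n+1]
     (big_and [Neg (Eq i j). i \<leftarrow> [1..<n+1], j \<leftarrow> [1..<n+1], i < j])"

definition psi_le :: "nat \<Rightarrow> form" where
  "psi_le n = exs [1..<n+1] (All 0 (big_or [Eq 0 i. i \<leftarrow> [1..<n+1]]))"

definition psi_eq :: "nat \<Rightarrow> form" where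
  "psi_eq n = Conj (psi_ge n) (psi_le n)"

definition T_bb_axiom :: "nat \<Rightarrow> form" where
  "T_bb_axiom k = Disj (psi_ge (busy_beaver (k+2)))
      (big_or [psi_eq (busy_beaver i). i \<leftarrow> [2..<k+3]])"

definition T_bb_interp :: "'a set \<Rightarrow> (nat \<Rightarrow> 'a) \<Rightarrow> bool" where
  "T_bb_interp D v \<longleftrightarrow> interp D v \<and> (\<forall>k. sat D v (T_bb_axiom k))"

definition stably_finite :: "('a set \<Rightarrow> (nat \<Rightarrow> 'a) \<Rightarrow> bool) \<Rightarrow> bool" where
  "stably_finite T \<longleftrightarrow> (\<forall>\<phi> D v. qfree \<phi> \<and> T D v \<and> sat D v \<phi> \<longrightarrow>
      (\<exists>D' v'. T D' v' \<and> sat D' v' \<phi> \<and> finite D' \<and> D' \<lesssim> D))"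

definition finite_model_property :: "('a set \<Rightarrow> (nat \<Rightarrow> 'a) \<Rightarrow> bool) \<Rightarrow> bool" where
  "finite_model_property T \<longleftrightarrow> (\<forall>\<phi>. qfree \<phi> \<longrightarrow> (\<exists>D v. T D v \<and> sat D v \<phi>) \<longrightarrow>
      (\<exists>D' v'. T D' v' \<and> sat D' v' \<phi> \<and> finite D'))"

end

theory Submission
  imports Defs
begin

text \<open>A quantifier-free formula only sees the elements named by its finitely many variables, so
  in an infinite model it stays true on every finite subdomain containing them, and there are
  such subdomains of every size at least their number. Hence it suffices that the theory has
  finite models of arbitrarily large size. This needs no property of \<open>\<varsigma>\<close> at all: if \<open>\<varsigma>\<close> is
  bounded on \<open>{2, 3, ...}\<close>, every large \<open>n\<close> satisfies all axioms through their \<open>psi_ge\<close>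
  disjunct; otherwise \<open>\<varsigma>\<close> has arbitrarily large record values \<open>\<varsigma> j\<close>, with \<open>\<varsigma> l \<le> \<varsigma> j\<close> for
  \<open>2 \<le> l \<le> j\<close>, and a domain of exactly \<open>\<varsigma> j\<close> elements satisfies the \<open>k\<close>-th axiom through
  \<open>psi_eq (\<varsigma> j)\<close> if \<open>j \<le> k + 2\<close> and through \<open>psi_ge (\<varsigma> (k + 2))\<close> otherwise.\<close>

fun vars :: "form \<Rightarrow> nat set" where
  "vars (Eq x y) = {x, y}"
| "vars (Neg p) = vars p"
| "vars (Conj p q) = vars p \<union> vars q"
| "vars (Disj p q) = vars p \<union> vars q"
| "vars (Ex x p) = insert x (vars p)"
| "vars (All x p) = insert x (vars p)"
| "vars FTrue = {}"
| "vars FFalse = {}"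

lemma finite_vars: "finite (vars p)"
  by (induction p) auto

lemma sat_qfree_cong:
  "qfree p \<Longrightarrow> (\<And>x. x \<in> vars p \<Longrightarrow> v x = v' x) \<Longrightarrow> sat D v p = sat D' v' p"
  by (induction p) auto

lemma sat_qfree_transfer:
  assumes "qfree \<phi>" "sat D v \<phi>" "v ` vars \<phi> \<subseteq> D'" "D' \<noteq> {}"
  obtains v' where "interp D' v'" "sat D' v' \<phi>"
proof -
  obtain d where "d \<in> D'" using assms(4) by blast
  let ?v' = "override_on (\<lambda>_. d) v (vars \<phi>)"
  have "interp D' ?v'"
    using assms(3,4) \<open>d \<in> D'\<close> by (auto simp: interp_def override_on_def)
  moreover have "sat D' ?v' \<phi>"
    using sat_qfree_cong[OF assms(1), of ?v' v D' D] assms(2) by simp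
  ultimately show thesis by (rule that)
qed

lemma sat_big_and: "sat D v (big_and ps) = (\<forall>p\<in>set ps. sat D v p)"
  unfolding big_and_def by (induction ps) auto

lemma sat_big_or: "sat D v (big_or ps) = (\<exists>p\<in>set ps. sat D v p)"
  unfolding big_or_def by (induction ps) auto

lemma sat_exsI:
  assumes "u ` set xs \<subseteq> D" "sat D (override_on v u (set xs)) p"
  shows "sat D v (exs xs p)"
  using assms
proof (induction xs arbitrary: v)
  case Nil
  then show ?case by (simp add: exs_def)
next
  case (Cons x xs)
  have "override_on (v(x := u x)) u (set xs) = override_on v u (set (x # xs))"
    by (auto simp: override_on_def)
  then have "sat D (v(x := u x)) (exs xs p)"
    using Cons by simp
  then show ?case
    using Cons.prems(1) by (auto simp: exs_def)
qed

lemma sat_psi_ge: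
  assumes "finite D" "N \<le> card D"
  shows "sat D v (psi_ge N)"
proof -
  obtain f where f: "f ` {1..<N+1} \<subseteq> D" "inj_on f {1..<N+1}"
    using card_le_inj[of "{1..<N+1}" D] assms by auto
  have "sat D (override_on v f {1..<N+1}) (Neg (Eq i j))"
    if "i \<in> {1..<N+1}" "j \<in> {1..<N+1}" "i < j" for i j
    using that inj_onD[OF f(2), of i j] by (auto simp: override_on_def)
  then have "sat D (override_on v f {1..<N+1})
      (big_and [Neg (Eq i j). i \<leftarrow> [1..<N+1], j \<leftarrow> [1..<N+1], i < j])"
    unfolding sat_big_and by (auto split: if_splits)
  then show ?thesis
    using sat_exsI[of f "[1..<N+1]" D v] f(1) unfolding psi_ge_def set_upt by blast
qed

lemma sat_psi_eq_card:
  assumes "finite D"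
  shows "sat D v (psi_eq (card D))"
proof -
  let ?N = "card D"
  obtain h where h: "bij_betw h {1..<?N+1} D"
    using ex_bij_betw_nat_finite_1[OF assms] atLeastLessThanSuc_atLeastAtMost by auto
  let ?v = "override_on v h {1..<?N+1}"
  have "sat D (?v(0 := d)) (big_or [Eq 0 i. i \<leftarrow> [1..<?N+1]])" if "d \<in> D" for d
  proof -
    obtain i where "i \<in> {1..<?N+1}" "h i = d"
      using h \<open>d \<in> D\<close> by (metis bij_betw_imp_surj_on imageE)
    then have "Eq 0 i \<in> set [Eq 0 i. i \<leftarrow> [1..<?N+1]]" "sat D (?v(0 := d)) (Eq 0 i)"
      by (auto simp: override_on_def)
    then show ?thesis unfolding sat_big_or by blast
  qed
  then have "sat D ?v (All 0 (big_or [Eq 0 i. i \<leftarrow> [1..<?N+1]]))"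
    by simp
  then have "sat D v (psi_le ?N)"
    using sat_exsI[of h "[1..<?N+1]" D v] h unfolding psi_le_def set_upt bij_betw_def by blast
  then show ?thesis
    using sat_psi_ge[OF assms order_refl] by (simp add: psi_eq_def)
qed

definition admissible_size :: "(nat \<Rightarrow> nat) \<Rightarrow> nat \<Rightarrow> bool" where
  "admissible_size f n \<longleftrightarrow> (\<forall>k. f (k + 2) \<le> n \<or> n \<in> f ` {2..k + 2})"

lemma admissible_size_upper_bound:
  "(\<And>i. 2 \<le> i \<Longrightarrow> f i \<le> n) \<Longrightarrow> admissible_size f n"
  by (simp add: admissible_size_def)

lemma admissible_size_record:
  assumes "2 \<le> j" "\<And>l. l \<in> {2..j} \<Longrightarrow> f l \<le> f j"
  shows "admissible_size f (f j)"
  unfolding admissible_size_def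
proof
  fix k
  show "f (k + 2) \<le> f j \<or> f j \<in> f ` {2..k + 2}"
  proof (cases "k + 2 \<le> j")
    case True
    then show ?thesis using assms(2) by simp
  next
    case False
    then show ?thesis using assms(1) by force
  qed
qed

lemma admissible_size_unbounded: "\<exists>n\<ge>m. admissible_size f n"
proof (cases "\<exists>B. \<forall>i\<ge>2. f i \<le> B")
  case True
  then obtain B where "\<And>i. 2 \<le> i \<Longrightarrow> f i \<le> B" by blast
  then have "admissible_size f (max B m)"
    by (intro admissible_size_upper_bound) (simp add: le_max_iff_disj)
  then show ?thesis by (intro exI[of _ "max B m"]) simp
next
  case False
  then obtain i where i: "2 \<le> i" "m < f i" by (meson not_le)
  have "Max (f ` {2..i}) \<in> f ` {2..i}"
    using i(1) by (intro Max_in) auto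
  then obtain j where j: "j \<in> {2..i}" "f j = Max (f ` {2..i})"
    by (metis imageE)
  then have j_max: "\<And>l. l \<in> {2..i} \<Longrightarrow> f l \<le> f j"
    by simp
  have "admissible_size f (f j)"
    using j j_max by (intro admissible_size_record) auto
  moreover have "m \<le> f j"
    using i j_max[of i] by simp
  ultimately show ?thesis by blast
qed

lemma T_bb_interp_if_admissible_card:
  assumes "finite D" "interp D v" "admissible_size busy_beaver (card D)"
  shows "T_bb_interp D v"
  unfolding T_bb_interp_def
proof (intro conjI allI)
  fix k
  consider "busy_beaver (k + 2) \<le> card D" | i where "i \<in> {2..k + 2}" "card D = busy_beaver i"
    using assms(3) unfolding admissible_size_def by blast
  then show "sat D v (T_bb_axiom k)"
  proof cases
    case 1
    then show ?thesis using sat_psi_ge[OF assms(1)] by (simp add: T_bb_axiom_def)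
  next
    case 2
    then have "psi_eq (busy_beaver i) \<in> set [psi_eq (busy_beaver i). i \<leftarrow> [2..<k+3]]"
      by auto
    then show ?thesis
      using sat_psi_eq_card[OF assms(1), of v] 2(2) by (auto simp: T_bb_axiom_def sat_big_or)
  qed
qed (fact assms(2))

lemma infinite_obtain_finite_superset_card:
  assumes "infinite D" "finite A" "A \<subseteq> D" "card A \<le> n"
  obtains D' where "A \<subseteq> D'" "D' \<subseteq> D" "finite D'" "card D' = n"
proof -
  have "infinite (D - A)"
    using assms(2,1) by (rule Diff_infinite_finite)
  then obtain B where B: "finite B" "card B = n - card A" "B \<subseteq> D - A"
    using infinite_arbitrarily_large by blast
  have "A \<subseteq> A \<union> B" "A \<union> B \<subseteq> D" "finite (A \<union> B)"
    using B assms(2,3) by auto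
  moreover have "card (A \<union> B) = n"
    using B assms(2,4) card_Un_disjoint[of A B] by auto
  ultimately show thesis by (rule that)
qed

lemma stably_finite_T_bb: "stably_finite (T_bb_interp :: 'a set \<Rightarrow> (nat \<Rightarrow> 'a) \<Rightarrow> bool)"
  unfolding stably_finite_def
proof (intro allI impI)
  fix \<phi> and D :: "'a set" and v
  assume \<phi>: "qfree \<phi> \<and> T_bb_interp D v \<and> sat D v \<phi>"
  show "\<exists>(D' :: 'a set) v'. T_bb_interp D' v' \<and> sat D' v' \<phi> \<and> finite D' \<and> D' \<lesssim> D"
  proof (cases "finite D")
    case True
    then show ?thesis using \<phi> lepoll_refl[of D] by blast
  next
    case False
    let ?A = "v ` vars \<phi>"
    have "?A \<subseteq> D"
      using \<phi> by (auto simp: T_bb_interp_def interp_def)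
    obtain n where n: "max 1 (card ?A) \<le> n" "admissible_size busy_beaver n"
      using admissible_size_unbounded by blast
    then obtain D' where D': "?A \<subseteq> D'" "D' \<subseteq> D" "finite D'" "card D' = n"
      using infinite_obtain_finite_superset_card[OF False _ \<open>?A \<subseteq> D\<close>] finite_vars by auto
    then have "D' \<noteq> {}"
      using n(1) by auto
    then obtain v' where "interp D' v'" "sat D' v' \<phi>"
      using sat_qfree_transfer \<phi> D'(1) by blast
    moreover have "T_bb_interp D' v'"
      using T_bb_interp_if_admissible_card[OF D'(3) \<open>interp D' v'\<close>] D'(4) n(2) by simp
    ultimately show ?thesis
      using D' subset_imp_lepoll by blast
  qed
qed

lemma finite_model_property_if_stably_finite:
  "stably_finite T \<Longrightarrow> finite_model_property T"
  unfolding stably_finite_def finite_model_property_def by blast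

theorem lemma52:
  shows "stably_finite (T_bb_interp :: 'a set \<Rightarrow> (nat \<Rightarrow> 'a) \<Rightarrow> bool)
       \<and> finite_model_property (T_bb_interp :: 'a set \<Rightarrow> (nat \<Rightarrow> 'a) \<Rightarrow> bool)"
  using stably_finite_T_bb finite_model_property_if_stably_finite by blast

end
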